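(* Let $\pi:L_{\mathcal F}\to L_{\mathcal G}$ satisfy (REG). For each $X\in L_{\mathcal F}$ and $Q\in L^*_{\mathcal F}\cap\mathcal P$, \[\inf_\Gamma K^\Gamma(X,Q)=K(X,Q),\] where the infimum is taken over all finite partitions $\Gamma$ of $\Omega$ into $\mathcal G$-measurable sets.
   Context: Let $(\Omega,\mathcal F,\mathbb P)$ be a probability space and $\mathcal G\subseteq\mathcal F$ a sub-$\sigma$-algebra. (In)equalities hold $\mathbb P$-a.s. unless a measure is indicated ($\ge_Q$: $Q$-a.s.); $\inf$ is the $\mathbb P$-essential infimum. $L_{\mathcal F}\subseteq L^0(\Omega,\mathcal F,\mathbb P)$, $L_{\mathcal G}\subseteq L^0(\Omega,\mathcal G,\mathbb P)$ are vector lattices closed under multiplication by indicators of $\mathcal F$- (resp. $\mathcal G$-) measurable sets; the order continuous dual $L^*_{\mathcal F}$ of $(L_{\mathcal F},\ge)$ is a lattice contained in $L^1(\Omega,\mathcal F,\mathbb P)$ (functionals $X\mapsto E_{\mathbb P}[ZX]$), closed under multiplication by indicators of sets in $\mathcal F$. $\mathcal P$ = densities of probabilities $Q\ll\mathbb P$. (REG): $\pi(X\mathbf 1_A+Y\mathbf 1_{A^c})=\pi(X)\mathbf 1_A+\pi(Y)\mathbf 1_{A^c}$ for $A\in\mathcal G$. $K(X,Q):=\inf_{\xi\in L_{\mathcal F}}\{\pi(\xi)\mid E_Q[\xi\mid\mathcal G]\ge_Q E_Q[X\mid\mathcal G]\}$. For $A\in\mathcal G$, $\pi_A(X):=\operatorname{ess\,sup}_{\omega\in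 A}\pi(X)(\omega)$; for a finite $\mathcal G$-measurable partition $\Gamma$, $\pi^\Gamma(X):=\sum_{A\in\Gamma}\pi_A(X)\mathbf 1_A$ and $K^\Gamma(X,Q):=\inf_{\xi\in L_{\mathcal F}}\{\pi^\Gamma(\xi)\mid E_Q[\xi\mid\mathcal G]\ge_Q E_Q[X\mid\mathcal G]\}$. *)

theory Defs
  imports "HOL-Probability.Probability"
begin

text \<open>Random variables are functions on the sample space; all (in)equalities between them
are understood M-almost surely (M is the reference probability P).\<close>

text \<open>A space of random variables (a set of representatives of a subspace of L0):
measurable w.r.t. N, a vector lattice for the a.s. order, closed under multiplication by
indicators of N-measurable sets, and closed under M-a.s. modification.\<close>
definition rv_lattice :: "'a measure \<Rightarrow> 'a measure \<Rightarrow> ('a \<Rightarrow> real) set \<Rightarrow> bool" where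
  "rv_lattice M N S \<longleftrightarrow>
     S \<subseteq> borel_measurable N \<and> (\<lambda>_. 0) \<in> S \<and>
     (\<forall>X\<in>S. \<forall>Y\<in>S. (\<lambda>\<omega>. X \<omega> + Y \<omega>) \<in> S \<and> (\<lambda>\<omega>. max (X \<omega>) (Y \<omega>)) \<in> S) \<and>
     (\<forall>c::real. \<forall>X\<in>S. (\<lambda>\<omega>. c * X \<omega>) \<in> S) \<and>
     (\<forall>A\<in>sets N. \<forall>X\<in>S. (\<lambda>\<omega>. X \<omega> * indicator A \<omega>) \<in> S) \<and>
     (\<forall>X\<in>S. \<forall>Y\<in>borel_measurable N. (AE \<omega> in M. X \<omega> = Y \<omega>) \<longrightarrow> Y \<in> S)"

text \<open>Order continuity of a linear functional on LF: phi(X_alpha) -> 0 whenever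
X_alpha decreases (downward directed net) to 0 in the order of LF.\<close>
definition order_continuous :: "'a measure \<Rightarrow> ('a \<Rightarrow> real) set \<Rightarrow> (('a \<Rightarrow> real) \<Rightarrow> real) \<Rightarrow> bool" where
  "order_continuous M LF \<phi> \<longleftrightarrow>
     (\<forall>D. D \<subseteq> LF \<and> D \<noteq> {} \<and>
          (\<forall>X\<in>D. \<forall>Y\<in>D. \<exists>W\<in>D. (AE \<omega> in M. W \<omega> \<le> X \<omega>) \<and> (AE \<omega> in M. W \<omega> \<le> Y \<omega>)) \<and>
          (\<forall>X\<in>D. AE \<omega> in M. 0 \<le> X \<omega>) \<and>
          (\<forall>Y\<in>LF. (\<forall>X\<in>D. AE \<omega> in M. Y \<omega> \<le> X \<omega>) \<longrightarrow> (AE \<omega> in M. Y \<omega> \<le> 0))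
      \<longrightarrow> (\<forall>e>0. \<exists>X0\<in>D. \<forall>X\<in>D. (AE \<omega> in M. X \<omega> \<le> X0 \<omega>) \<longrightarrow> \<bar>\<phi> X\<bar> < e))"

text \<open>The order continuous dual of LF, identified with the densities Z in L1 for which
X |-> E[Z X] is a (well-defined) order continuous functional on LF.\<close>
definition oc_dual :: "'a measure \<Rightarrow> ('a \<Rightarrow> real) set \<Rightarrow> ('a \<Rightarrow> real) set" where
  "oc_dual M LF = {Z. integrable M Z \<and> (\<forall>X\<in>LF. integrable M (\<lambda>\<omega>. Z \<omega> * X \<omega>)) \<and>
                      order_continuous M LF (\<lambda>X. \<integral>\<omega>. Z \<omega> * X \<omega> \<partial>M)}"

text \<open>Densities of probability measures Q << P.\<close>
definition prob_densities :: "'a measure \<Rightarrow> ('a \<Rightarrow> real) set" where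
  "prob_densities M = {Z. integrable M Z \<and> (AE \<omega> in M. 0 \<le> Z \<omega>) \<and> (\<integral>\<omega>. Z \<omega> \<partial>M) = 1}"

definition dmeas :: "'a measure \<Rightarrow> ('a \<Rightarrow> real) \<Rightarrow> 'a measure" where
  "dmeas M Q = density M (\<lambda>\<omega>. ennreal (Q \<omega>))"

definition is_ess_inf :: "'a measure \<Rightarrow> 'a measure \<Rightarrow> ('a \<Rightarrow> ereal) set \<Rightarrow> ('a \<Rightarrow> ereal) \<Rightarrow> bool" where
  "is_ess_inf M N S Y \<longleftrightarrow> Y \<in> borel_measurable N \<and> (\<forall>X\<in>S. AE \<omega> in M. Y \<omega> \<le> X \<omega>) \<and>
     (\<forall>Z\<in>borel_measurable N. (\<forall>X\<in>S. AE \<omega> in M. Z \<omega> \<le> X \<omega>) \<longrightarrow> (AE \<omega> in M. Z \<omega> \<le> Y \<omega>))"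

definition ess_inf_fam :: "'a measure \<Rightarrow> 'a measure \<Rightarrow> ('a \<Rightarrow> ereal) set \<Rightarrow> ('a \<Rightarrow> ereal)" where
  "ess_inf_fam M N S = (SOME Y. is_ess_inf M N S Y)"

definition Kfun :: "'a measure \<Rightarrow> 'a measure \<Rightarrow> ('a \<Rightarrow> real) set \<Rightarrow> (('a \<Rightarrow> real) \<Rightarrow> 'a \<Rightarrow> ereal)
                    \<Rightarrow> ('a \<Rightarrow> real) \<Rightarrow> ('a \<Rightarrow> real) \<Rightarrow> 'a \<Rightarrow> ereal" where
  "Kfun M G LF \<rho> X Q = ess_inf_fam M G
     (\<rho> ` {\<xi>\<in>LF. AE \<omega> in dmeas M Q.
              real_cond_exp (dmeas M Q) G \<xi> \<omega> \<ge> real_cond_exp (dmeas M Q) G X \<omega>})"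

definition pi_A :: "'a measure \<Rightarrow> (('a \<Rightarrow> real) \<Rightarrow> 'a \<Rightarrow> real) \<Rightarrow> 'a set \<Rightarrow> ('a \<Rightarrow> real) \<Rightarrow> ereal" where
  "pi_A M \<pi> A X = esssup M (\<lambda>\<omega>. if \<omega> \<in> A then ereal (\<pi> X \<omega>) else -\<infinity>)"

definition pi_Gamma :: "'a measure \<Rightarrow> (('a \<Rightarrow> real) \<Rightarrow> 'a \<Rightarrow> real) \<Rightarrow> 'a set set \<Rightarrow> ('a \<Rightarrow> real) \<Rightarrow> 'a \<Rightarrow> ereal" where
  "pi_Gamma M \<pi> \<Gamma> X = (\<lambda>\<omega>. \<Sum>A\<in>\<Gamma>. pi_A M \<pi> A X * indicator A \<omega>)"

definition fin_partition :: "'a measure \<Rightarrow> 'a set set \<Rightarrow> bool" where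
  "fin_partition G \<Gamma> \<longleftrightarrow> finite \<Gamma> \<and> \<Gamma> \<subseteq> sets G \<and> \<Union>\<Gamma> = space G \<and> {} \<notin> \<Gamma> \<and> disjoint \<Gamma>"

definition K_Gamma :: "'a measure \<Rightarrow> 'a measure \<Rightarrow> ('a \<Rightarrow> real) set \<Rightarrow> (('a \<Rightarrow> real) \<Rightarrow> 'a \<Rightarrow> real)
                    \<Rightarrow> 'a set set \<Rightarrow> ('a \<Rightarrow> real) \<Rightarrow> ('a \<Rightarrow> real) \<Rightarrow> 'a \<Rightarrow> ereal" where
  "K_Gamma M G LF \<pi> \<Gamma> X Q = Kfun M G LF (pi_Gamma M \<pi> \<Gamma>) X Q"

definition K :: "'a measure \<Rightarrow> 'a measure \<Rightarrow> ('a \<Rightarrow> real) set \<Rightarrow> (('a \<Rightarrow> real) \<Rightarrow> 'a \<Rightarrow> real)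
                    \<Rightarrow> ('a \<Rightarrow> real) \<Rightarrow> ('a \<Rightarrow> real) \<Rightarrow> 'a \<Rightarrow> ereal" where
  "K M G LF \<pi> X Q = Kfun M G LF (\<lambda>\<xi> \<omega>. ereal (\<pi> \<xi> \<omega>)) X Q"

definition REG :: "'a measure \<Rightarrow> 'a measure \<Rightarrow> ('a \<Rightarrow> real) set \<Rightarrow> (('a \<Rightarrow> real) \<Rightarrow> 'a \<Rightarrow> real) \<Rightarrow> bool" where
  "REG M G LF \<pi> \<longleftrightarrow> (\<forall>A\<in>sets G. \<forall>X\<in>LF. \<forall>Y\<in>LF.
     AE \<omega> in M. \<pi> (\<lambda>\<eta>. X \<eta> * indicator A \<eta> + Y \<eta> * indicator (space M - A) \<eta>) \<omega>
                 = \<pi> X \<omega> * indicator A \<omega> + \<pi> Y \<omega> * indicator (space M - A) \<omega>)"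

end

theory Submission
  imports Defs
begin

text \<open>
  Since \<pi>(\<xi>) \<le> pi_Gamma(\<xi>) a.s. for every partition, K(X,Q) \<le> K_Gamma(X,Q). Conversely, fix an
  admissible \<xi>: partitioning \<Omega> into the level sets of a grid discretisation of the G-measurable
  function \<pi>(\<xi>), with cells of width 1/n on {|\<pi>(\<xi>)| < n}, gives pi_Gamma(\<xi>) \<le> \<pi>(\<xi>) + 1/n
  there. So the infimum over all partitions lies a.s. below every admissible \<pi>(\<xi>), hence below
  K(X,Q). The essential infima exist because, after composing with a bounded strictly increasing
  map of the extended reals into the reals, the integral of a maximising sequence of lower bounds
  singles out a largest lower bound.
\<close>

section \<open>Essential infima of arbitrary families\<close>

definition arctan_ereal :: "ereal \<Rightarrow> real" where
  "arctan_ereal x = (case x of ereal r \<Rightarrow> arctan r | PInfty \<Rightarrow> pi / 2 | MInfty \<Rightarrow> - (pi / 2))"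

lemma strict_mono_arctan_ereal: "strict_mono arctan_ereal"
proof (rule strict_monoI)
  fix x y :: ereal
  assume "x < y"
  have "- (pi / 2) < arctan r" "arctan r < pi / 2" for r
    using arctan_bounded by auto
  with \<open>x < y\<close> show "arctan_ereal x < arctan_ereal y"
    using pi_gt_zero by (cases x; cases y) (auto simp: arctan_ereal_def arctan_less_iff)
qed

lemma arctan_ereal_le_iff [simp]: "arctan_ereal x \<le> arctan_ereal y \<longleftrightarrow> x \<le> y"
  using strict_mono_arctan_ereal by (rule strict_mono_less_eq)

lemma arctan_ereal_eq_iff [simp]: "arctan_ereal x = arctan_ereal y \<longleftrightarrow> x = y"
  using strict_mono_arctan_ereal by (rule strict_mono_eq)

lemma abs_arctan_ereal_le: "\<bar>arctan_ereal x\<bar> \<le> pi / 2"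
  using arctan_bounded[of "real_of_ereal x"] pi_gt_zero
  by (cases x) (auto simp: arctan_ereal_def abs_le_iff)

lemma borel_measurable_arctan_ereal [measurable]:
  "f \<in> borel_measurable M \<Longrightarrow> (\<lambda>x. arctan_ereal (f x)) \<in> borel_measurable M"
  by (rule borel_measurable_ereal_cases[where H = arctan_ereal]) (auto simp: arctan_ereal_def)

lemma (in finite_measure) integrable_arctan_ereal:
  "f \<in> borel_measurable M \<Longrightarrow> integrable M (\<lambda>\<omega>. arctan_ereal (f \<omega>))"
  using abs_arctan_ereal_le by (intro integrable_const_bound[where B = "pi / 2"]) auto

lemma (in finite_measure) AE_eq_if_integral_arctan_ereal_le:
  assumes "Y \<in> borel_measurable M" "W \<in> borel_measurable M" "\<And>\<omega>. Y \<omega> \<le> W \<omega>"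
    and "(\<integral>\<omega>. arctan_ereal (W \<omega>) \<partial>M) \<le> (\<integral>\<omega>. arctan_ereal (Y \<omega>) \<partial>M)"
  shows "AE \<omega> in M. Y \<omega> = W \<omega>"
proof -
  have "(\<integral>\<omega>. arctan_ereal (Y \<omega>) \<partial>M) \<le> (\<integral>\<omega>. arctan_ereal (W \<omega>) \<partial>M)"
    using assms by (intro integral_mono integrable_arctan_ereal) auto
  with assms have "AE \<omega> in M. arctan_ereal (Y \<omega>) = arctan_ereal (W \<omega>)"
    by (intro integral_eq_mono_AE_eq_AE integrable_arctan_ereal) auto
  then show ?thesis by simp
qed

lemma (in finite_measure) ex_AE_greatest:
  fixes L :: "('a \<Rightarrow> ereal) set"
  assumes L_meas: "L \<subseteq> borel_measurable M" and "L \<noteq> {}"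
    and L_max: "\<And>Y Z. Y \<in> L \<Longrightarrow> Z \<in> L \<Longrightarrow> (\<lambda>\<omega>. max (Y \<omega>) (Z \<omega>)) \<in> L"
    and L_SUP: "\<And>Z. (\<And>k::nat. Z k \<in> L) \<Longrightarrow> (\<lambda>\<omega>. SUP k. Z k \<omega>) \<in> L"
  shows "\<exists>Y\<in>L. \<forall>Z\<in>L. AE \<omega> in M. Z \<omega> \<le> Y \<omega>"
proof -
  define I where "I Z = (\<integral>\<omega>. arctan_ereal (Z \<omega>) \<partial>M)" for Z :: "'a \<Rightarrow> ereal"
  have I_le: "I Z \<le> pi / 2 * measure M (space M)" if "Z \<in> L" for Z
  proof -
    have "I Z \<le> (\<integral>\<omega>. pi / 2 \<partial>M)"
      unfolding I_def using that L_meas abs_le_D1[OF abs_arctan_ereal_le]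
      by (intro integral_mono integrable_arctan_ereal) auto
    then show ?thesis by (simp add: mult.commute)
  qed
  then have bdd: "bdd_above (I ` L)"
    unfolding bdd_above_def by blast
  define c where "c = (SUP Z\<in>L. I Z)"
  have "\<exists>Z\<in>L. c - 1 / Suc k < I Z" for k :: nat
    unfolding c_def using \<open>L \<noteq> {}\<close> bdd by (subst less_cSUP_iff[symmetric]) auto
  then obtain Zs where Zs: "\<And>k. Zs k \<in> L" "\<And>k. c - 1 / Suc k < I (Zs k)" by metis
  define Y where "Y \<omega> = (SUP k. Zs k \<omega>)" for \<omega>
  have "Y \<in> L" unfolding Y_def using Zs(1) by (rule L_SUP)
  have Zs_le_Y: "Zs k \<omega> \<le> Y \<omega>" for k \<omega>
    unfolding Y_def by (rule SUP_upper) simp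
  have "c \<le> I Y"
  proof (rule field_le_epsilon)
    fix e :: real assume "0 < e"
    then obtain k where "1 / Suc k < e" using nat_approx_posE by metis
    moreover have "I (Zs k) \<le> I Y"
      unfolding I_def using Zs(1) \<open>Y \<in> L\<close> L_meas
      by (intro integral_mono integrable_arctan_ereal) (auto simp: Zs_le_Y)
    ultimately show "c \<le> I Y + e" using Zs(2)[of k] by linarith
  qed
  have "AE \<omega> in M. Z \<omega> \<le> Y \<omega>" if "Z \<in> L" for Z
  proof -
    define W where "W \<omega> = max (Y \<omega>) (Z \<omega>)" for \<omega>
    have "W \<in> L" unfolding W_def using \<open>Y \<in> L\<close> that by (rule L_max)
    then have "I W \<le> c" unfolding c_def using bdd by (rule cSUP_upper)
    moreover have "Y \<omega> \<le> W \<omega>" for \<omega> by (simp add: W_def)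
    ultimately have "AE \<omega> in M. Y \<omega> = W \<omega>"
      using \<open>c \<le> I Y\<close> \<open>Y \<in> L\<close> \<open>W \<in> L\<close> L_meas unfolding I_def
      by (intro AE_eq_if_integral_arctan_ereal_le) auto
    then show ?thesis by eventually_elim (simp add: W_def max_def split: if_splits)
  qed
  with \<open>Y \<in> L\<close> show ?thesis by blast
qed

lemma is_ess_inf_ess_inf_fam:
  assumes "finite_measure M" and sub: "subalgebra M G"
  shows "is_ess_inf M G S (ess_inf_fam M G S)"
proof -
  interpret finite_measure M by fact
  define L where "L = {Y \<in> borel_measurable G. \<forall>X\<in>S. AE \<omega> in M. Y \<omega> \<le> X \<omega>}"
  have "\<exists>Y\<in>L. \<forall>Z\<in>L. AE \<omega> in M. Z \<omega> \<le> Y \<omega>"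
  proof (rule ex_AE_greatest)
    show "L \<subseteq> borel_measurable M"
      unfolding L_def using measurable_from_subalg[OF sub] by blast
    show "L \<noteq> {}"
      unfolding L_def by (auto intro!: exI[of _ "\<lambda>_. -\<infinity>"])
    show "(\<lambda>\<omega>. max (Y \<omega>) (Z \<omega>)) \<in> L" if "Y \<in> L" "Z \<in> L" for Y Z
      using that unfolding L_def by (auto elim!: AE_mp[OF _ AE_mp] intro!: AE_I2)
    show "(\<lambda>\<omega>. SUP k. Z k \<omega>) \<in> L" if Z: "\<And>k::nat. Z k \<in> L" for Z
    proof -
      have "(\<lambda>\<omega>. SUP k. Z k \<omega>) \<in> borel_measurable G"
        using Z unfolding L_def by (intro borel_measurable_SUP) auto
      moreover have "AE \<omega> in M. (SUP k. Z k \<omega>) \<le> X \<omega>" if "X \<in> S" for X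
      proof -
        have "AE \<omega> in M. \<forall>k. Z k \<omega> \<le> X \<omega>"
          using Z that unfolding L_def by (auto simp: AE_all_countable)
        then show ?thesis by eventually_elim (blast intro: SUP_least)
      qed
      ultimately show ?thesis unfolding L_def by blast
    qed
  qed
  then have "\<exists>Y. is_ess_inf M G S Y" unfolding is_ess_inf_def L_def by blast
  then show ?thesis unfolding ess_inf_fam_def by (rule someI_ex)
qed

lemma is_ess_inf_measurable: "is_ess_inf M N S Y \<Longrightarrow> Y \<in> borel_measurable N"
  unfolding is_ess_inf_def by blast

lemma is_ess_inf_lower: "is_ess_inf M N S Y \<Longrightarrow> X \<in> S \<Longrightarrow> AE \<omega> in M. Y \<omega> \<le> X \<omega>"
  unfolding is_ess_inf_def by blast

lemma is_ess_inf_greatest: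
  "is_ess_inf M N S Y \<Longrightarrow> Z \<in> borel_measurable N \<Longrightarrow> (\<And>X. X \<in> S \<Longrightarrow> AE \<omega> in M. Z \<omega> \<le> X \<omega>)
    \<Longrightarrow> AE \<omega> in M. Z \<omega> \<le> Y \<omega>"
  unfolding is_ess_inf_def by blast

lemma is_ess_inf_image_AE_mono:
  assumes Y: "is_ess_inf M N (f ` F) Y" and Z: "is_ess_inf M N (g ` F) Z"
    and le: "\<And>\<xi>. \<xi> \<in> F \<Longrightarrow> AE \<omega> in M. f \<xi> \<omega> \<le> g \<xi> \<omega>"
  shows "AE \<omega> in M. Y \<omega> \<le> Z \<omega>"
proof (rule is_ess_inf_greatest[OF Z is_ess_inf_measurable[OF Y]])
  fix X assume "X \<in> g ` F"
  then obtain \<xi> where "\<xi> \<in> F" "X = g \<xi>" by blast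
  have "AE \<omega> in M. Y \<omega> \<le> f \<xi> \<omega>" using is_ess_inf_lower[OF Y] \<open>\<xi> \<in> F\<close> by blast
  moreover have "AE \<omega> in M. f \<xi> \<omega> \<le> g \<xi> \<omega>" using le \<open>\<xi> \<in> F\<close> .
  ultimately show "AE \<omega> in M. Y \<omega> \<le> X \<omega>" unfolding \<open>X = g \<xi>\<close> by eventually_elim (rule order_trans)
qed

section \<open>Approximation by finite partitions\<close>

lemma fin_partition_level_sets:
  assumes g: "g \<in> measurable G (count_space UNIV)" and "finite (g ` space G)"
  shows "fin_partition G ((\<lambda>k. g -` {k} \<inter> space G) ` g ` space G)"
  unfolding fin_partition_def disjoint_def using assms measurable_sets[OF g] by auto

lemma ex_fin_partition_small_oscillation:
  fixes f :: "'a \<Rightarrow> real"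
  assumes f: "f \<in> borel_measurable G" and "0 < e"
  shows "\<exists>\<Gamma>. fin_partition G \<Gamma> \<and> (\<forall>A\<in>\<Gamma>. \<forall>\<omega>\<in>A. \<forall>\<eta>\<in>A. \<bar>f \<omega>\<bar> < b \<longrightarrow> f \<eta> < f \<omega> + e)"
proof -
  define g where "g \<eta> = (if \<bar>f \<eta>\<bar> < b then Some \<lfloor>f \<eta> / e\<rfloor> else None)" for \<eta>
  have "g \<in> measurable G (count_space UNIV)" unfolding g_def using f by measurable
  moreover have "\<lfloor>f \<eta> / e\<rfloor> \<in> {\<lfloor>- b / e\<rfloor>..\<lfloor>b / e\<rfloor>}" if "\<bar>f \<eta>\<bar> < b" for \<eta>
    using that \<open>0 < e\<close> by (auto simp: abs_less_iff field_simps intro!: floor_mono)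
  then have "g ` space G \<subseteq> insert None (Some ` {\<lfloor>- b / e\<rfloor>..\<lfloor>b / e\<rfloor>})"
    by (auto simp: g_def)
  then have "finite (g ` space G)" by (rule finite_subset) simp
  moreover have "f \<eta> < f \<omega> + e" if "g \<eta> = g \<omega>" "\<bar>f \<omega>\<bar> < b" for \<eta> \<omega>
  proof -
    have "\<lfloor>f \<eta> / e\<rfloor> = \<lfloor>f \<omega> / e\<rfloor>" using that by (auto simp: g_def split: if_splits)
    then have "f \<eta> / e < \<lfloor>f \<omega> / e\<rfloor> + 1" by (simp add: floor_eq_iff)
    then have "f \<eta> / e < f \<omega> / e + 1" using of_int_floor_le[of "f \<omega> / e"] by linarith
    then show ?thesis using \<open>0 < e\<close> by (simp add: field_simps)
  qed
  ultimately show ?thesis by (blast intro: fin_partition_level_sets)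
qed

lemma pi_Gamma_eq_pi_A:
  assumes "finite \<Gamma>" "disjoint \<Gamma>" "A \<in> \<Gamma>" "\<omega> \<in> A"
  shows "pi_Gamma M \<pi> \<Gamma> \<xi> \<omega> = pi_A M \<pi> A \<xi>"
proof -
  have "pi_A M \<pi> B \<xi> * indicator B \<omega> = (if B = A then pi_A M \<pi> A \<xi> else 0)" if "B \<in> \<Gamma>" for B
    using disjointD[OF assms(2) that assms(3)] assms(4) by (auto simp: indicator_def)
  then show ?thesis
    unfolding pi_Gamma_def using assms(1,3) by (simp add: sum.delta')
qed

lemma pi_A_le:
  assumes "A \<in> sets M" "\<pi> \<xi> \<in> borel_measurable M" "\<And>\<eta>. \<eta> \<in> A \<Longrightarrow> ereal (\<pi> \<xi> \<eta>) \<le> c"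
  shows "pi_A M \<pi> A \<xi> \<le> c"
  unfolding pi_A_def using assms by (intro esssup_I) auto

lemma AE_le_pi_A: "AE \<omega> in M. \<omega> \<in> A \<longrightarrow> ereal (\<pi> \<xi> \<omega>) \<le> pi_A M \<pi> A \<xi>"
  using esssup_AE[of "\<lambda>\<eta>. if \<eta> \<in> A then ereal (\<pi> \<xi> \<eta>) else -\<infinity>" M]
  unfolding pi_A_def by eventually_elim auto

lemma AE_le_pi_Gamma:
  assumes "subalgebra M G" "fin_partition G \<Gamma>"
  shows "AE \<omega> in M. ereal (\<pi> \<xi> \<omega>) \<le> pi_Gamma M \<pi> \<Gamma> \<xi> \<omega>"
proof -
  have \<Gamma>: "finite \<Gamma>" "disjoint \<Gamma>" "\<Union>\<Gamma> = space M"
    using assms by (auto simp: fin_partition_def subalgebra_def)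
  have "AE \<omega> in M. \<forall>A\<in>\<Gamma>. \<omega> \<in> A \<longrightarrow> ereal (\<pi> \<xi> \<omega>) \<le> pi_A M \<pi> A \<xi>"
    using \<Gamma>(1) AE_le_pi_A by (rule AE_finite_allI)
  with AE_space show ?thesis
    by eventually_elim (metis \<Gamma> UnionE pi_Gamma_eq_pi_A)
qed

lemma ex_pi_Gamma_le:
  assumes sub: "subalgebra M G" and meas: "\<pi> \<xi> \<in> borel_measurable G" and "0 < e"
  shows "\<exists>\<Gamma>. fin_partition G \<Gamma> \<and>
    (\<forall>\<omega>\<in>space M. \<bar>\<pi> \<xi> \<omega>\<bar> < b \<longrightarrow> pi_Gamma M \<pi> \<Gamma> \<xi> \<omega> \<le> ereal (\<pi> \<xi> \<omega> + e))"
proof -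
  obtain \<Gamma> where \<Gamma>: "fin_partition G \<Gamma>"
    and osc: "\<forall>A\<in>\<Gamma>. \<forall>\<omega>\<in>A. \<forall>\<eta>\<in>A. \<bar>\<pi> \<xi> \<omega>\<bar> < b \<longrightarrow> \<pi> \<xi> \<eta> < \<pi> \<xi> \<omega> + e"
    using ex_fin_partition_small_oscillation[OF meas \<open>0 < e\<close>] by blast
  have "pi_Gamma M \<pi> \<Gamma> \<xi> \<omega> \<le> ereal (\<pi> \<xi> \<omega> + e)"
    if \<omega>: "\<omega> \<in> space M" "\<bar>\<pi> \<xi> \<omega>\<bar> < b" for \<omega>
  proof -
    have "\<omega> \<in> \<Union>\<Gamma>" using \<Gamma> sub \<omega>(1) by (auto simp: fin_partition_def subalgebra_def)
    then obtain A where A: "A \<in> \<Gamma>" "\<omega> \<in> A" by blast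
    have "pi_Gamma M \<pi> \<Gamma> \<xi> \<omega> = pi_A M \<pi> A \<xi>"
      using \<Gamma> A by (intro pi_Gamma_eq_pi_A) (auto simp: fin_partition_def)
    also have "\<dots> \<le> ereal (\<pi> \<xi> \<omega> + e)"
    proof (rule pi_A_le)
      show "A \<in> sets M" using \<Gamma> A sub by (auto simp: fin_partition_def subalgebra_def)
      show "\<pi> \<xi> \<in> borel_measurable M" using measurable_from_subalg[OF sub meas] .
      show "ereal (\<pi> \<xi> \<eta>) \<le> ereal (\<pi> \<xi> \<omega> + e)" if "\<eta> \<in> A" for \<eta>
        using osc A that \<open>\<bar>\<pi> \<xi> \<omega>\<bar> < b\<close> by fastforce
    qed
    finally show ?thesis .
  qed
  with \<Gamma> show ?thesis by blast
qed

lemma ereal_le_if_le_approx: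
  fixes a :: ereal and r :: real
  assumes "\<And>n::nat. \<bar>r\<bar> < Suc n \<Longrightarrow> a \<le> ereal (r + 1 / Suc n)"
  shows "a \<le> ereal r"
proof (rule ereal_le_epsilon2)
  fix e :: real assume "0 < e"
  then obtain n1 where n1: "1 / Suc n1 < e" using nat_approx_posE by metis
  obtain n2 :: nat where "\<bar>r\<bar> < n2" using reals_Archimedean2 by blast
  define n where "n = max n1 n2"
  have "a \<le> ereal (r + 1 / Suc n)" using \<open>\<bar>r\<bar> < n2\<close> by (intro assms) (simp add: n_def)
  also have "1 / Suc n \<le> 1 / Suc n1" by (simp add: n_def frac_le)
  then have "ereal (r + 1 / Suc n) \<le> ereal r + ereal e" using n1 by simp
  finally show "a \<le> ereal r + ereal e" .
qed

lemma AE_le_pi_if_AE_le_pi_Gamma: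
  assumes sub: "subalgebra M G" and meas: "\<pi> \<xi> \<in> borel_measurable G"
    and le: "\<And>\<Gamma>. fin_partition G \<Gamma> \<Longrightarrow> AE \<omega> in M. E \<omega> \<le> pi_Gamma M \<pi> \<Gamma> \<xi> \<omega>"
  shows "AE \<omega> in M. E \<omega> \<le> ereal (\<pi> \<xi> \<omega>)"
proof -
  have "\<forall>n::nat. \<exists>\<Gamma>. fin_partition G \<Gamma> \<and> (\<forall>\<omega>\<in>space M. \<bar>\<pi> \<xi> \<omega>\<bar> < Suc n \<longrightarrow>
      pi_Gamma M \<pi> \<Gamma> \<xi> \<omega> \<le> ereal (\<pi> \<xi> \<omega> + 1 / Suc n))"
    using ex_pi_Gamma_le[where \<pi> = \<pi> and \<xi> = \<xi>, OF sub meas] by simp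
  then obtain \<Gamma> where \<Gamma>: "\<And>n. fin_partition G (\<Gamma> n)"
    and approx: "\<And>n \<omega>. \<omega> \<in> space M \<Longrightarrow> \<bar>\<pi> \<xi> \<omega>\<bar> < Suc n \<Longrightarrow>
      pi_Gamma M \<pi> (\<Gamma> n) \<xi> \<omega> \<le> ereal (\<pi> \<xi> \<omega> + 1 / Suc n)"
    by metis
  have "AE \<omega> in M. \<forall>n. E \<omega> \<le> pi_Gamma M \<pi> (\<Gamma> n) \<xi> \<omega>"
    using le[OF \<Gamma>] by (simp add: AE_all_countable)
  with AE_space show ?thesis
  proof eventually_elim
    case (elim \<omega>)
    show ?case
    proof (rule ereal_le_if_le_approx)
      fix n :: nat assume "\<bar>\<pi> \<xi> \<omega>\<bar> < Suc n"
      with elim show "E \<omega> \<le> ereal (\<pi> \<xi> \<omega> + 1 / Suc n)"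
        using approx order_trans by metis
    qed
  qed
qed

lemma AE_ess_inf_over_partitions_eq:
  assumes sub: "subalgebra M G" and meas: "\<And>\<xi>. \<xi> \<in> F \<Longrightarrow> \<pi> \<xi> \<in> borel_measurable G"
    and k: "is_ess_inf M G ((\<lambda>\<xi> \<omega>. ereal (\<pi> \<xi> \<omega>)) ` F) k"
    and k_Gamma: "\<And>\<Gamma>. is_ess_inf M G (pi_Gamma M \<pi> \<Gamma> ` F) (k_Gamma \<Gamma>)"
    and E: "is_ess_inf M G {k_Gamma \<Gamma> | \<Gamma>. fin_partition G \<Gamma>} E"
  shows "AE \<omega> in M. E \<omega> = k \<omega>"
proof -
  have "AE \<omega> in M. k \<omega> \<le> E \<omega>"
  proof (rule is_ess_inf_greatest[OF E is_ess_inf_measurable[OF k]])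
    fix Y assume "Y \<in> {k_Gamma \<Gamma> | \<Gamma>. fin_partition G \<Gamma>}"
    then obtain \<Gamma> where "fin_partition G \<Gamma>" "Y = k_Gamma \<Gamma>" by blast
    then show "AE \<omega> in M. k \<omega> \<le> Y \<omega>"
      using is_ess_inf_image_AE_mono[OF k k_Gamma AE_le_pi_Gamma[OF sub]] by simp
  qed
  moreover have "AE \<omega> in M. E \<omega> \<le> k \<omega>"
  proof (rule is_ess_inf_greatest[OF k is_ess_inf_measurable[OF E]])
    fix Y assume "Y \<in> (\<lambda>\<xi> \<omega>. ereal (\<pi> \<xi> \<omega>)) ` F"
    then obtain \<xi> where "\<xi> \<in> F" "Y = (\<lambda>\<omega>. ereal (\<pi> \<xi> \<omega>))" by blast
    have "AE \<omega> in M. E \<omega> \<le> ereal (\<pi> \<xi> \<omega>)"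
    proof (rule AE_le_pi_if_AE_le_pi_Gamma[where \<pi> = \<pi> and \<xi> = \<xi>, OF sub meas[OF \<open>\<xi> \<in> F\<close>]])
      fix \<Gamma> assume "fin_partition G \<Gamma>"
      have "AE \<omega> in M. E \<omega> \<le> k_Gamma \<Gamma> \<omega>"
        using is_ess_inf_lower[OF E] \<open>fin_partition G \<Gamma>\<close> by blast
      moreover have "AE \<omega> in M. k_Gamma \<Gamma> \<omega> \<le> pi_Gamma M \<pi> \<Gamma> \<xi> \<omega>"
        using is_ess_inf_lower[OF k_Gamma] \<open>\<xi> \<in> F\<close> by blast
      ultimately show "AE \<omega> in M. E \<omega> \<le> pi_Gamma M \<pi> \<Gamma> \<xi> \<omega>"
        by eventually_elim (rule order_trans)
    qed
    with \<open>Y = (\<lambda>\<omega>. ereal (\<pi> \<xi> \<omega>))\<close> show "AE \<omega> in M. E \<omega> \<le> Y \<omega>" by simp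
  qed
  ultimately show ?thesis by eventually_elim (rule antisym)
qed

theorem lemma26:
  fixes M G :: "'a measure" and LF LG :: "('a \<Rightarrow> real) set"
    and \<pi> :: "('a \<Rightarrow> real) \<Rightarrow> 'a \<Rightarrow> real" and X Q :: "'a \<Rightarrow> real"
  assumes "prob_space M" and "subalgebra M G"
    and "rv_lattice M M LF" and "rv_lattice M G LG"
    and "\<forall>Z1\<in>oc_dual M LF. \<forall>Z2\<in>oc_dual M LF.
           (\<lambda>\<omega>. max (Z1 \<omega>) (Z2 \<omega>)) \<in> oc_dual M LF \<and> (\<lambda>\<omega>. min (Z1 \<omega>) (Z2 \<omega>)) \<in> oc_dual M LF"
    and "\<forall>A\<in>sets M. \<forall>Z\<in>oc_dual M LF. (\<lambda>\<omega>. Z \<omega> * indicator A \<omega>) \<in> oc_dual M LF"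
    and "\<forall>\<xi>\<in>LF. \<pi> \<xi> \<in> LG"
    and "\<forall>\<xi>\<in>LF. \<forall>\<eta>\<in>LF. (AE \<omega> in M. \<xi> \<omega> = \<eta> \<omega>) \<longrightarrow> (AE \<omega> in M. \<pi> \<xi> \<omega> = \<pi> \<eta> \<omega>)"
    and "REG M G LF \<pi>"
    and "X \<in> LF" and "Q \<in> oc_dual M LF \<inter> prob_densities M"
  shows "AE \<omega> in M. ess_inf_fam M G {K_Gamma M G LF \<pi> \<Gamma> X Q | \<Gamma>. fin_partition G \<Gamma>} \<omega>
                     = K M G LF \<pi> X Q \<omega>"
proof -
  note ess_inf = is_ess_inf_ess_inf_fam[OF prob_space.finite_measure[OF \<open>prob_space M\<close>]
      \<open>subalgebra M G\<close>]
  define F where "F = {\<xi>\<in>LF. AE \<omega> in dmeas M Q.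
    real_cond_exp (dmeas M Q) G \<xi> \<omega> \<ge> real_cond_exp (dmeas M Q) G X \<omega>}"
  show ?thesis
  proof (rule AE_ess_inf_over_partitions_eq[OF \<open>subalgebra M G\<close>])
    show "\<pi> \<xi> \<in> borel_measurable G" if "\<xi> \<in> F" for \<xi>
      using that assms(4,7) by (auto simp: F_def rv_lattice_def)
    show "is_ess_inf M G ((\<lambda>\<xi> \<omega>. ereal (\<pi> \<xi> \<omega>)) ` F) (K M G LF \<pi> X Q)"
      unfolding K_def Kfun_def F_def by (rule ess_inf)
    show "is_ess_inf M G (pi_Gamma M \<pi> \<Gamma> ` F) (K_Gamma M G LF \<pi> \<Gamma> X Q)" for \<Gamma>
      unfolding K_Gamma_def Kfun_def F_def by (rule ess_inf)
  qed (rule ess_inf)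
qed

end
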